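(* There exists an absolute constant $C\ge1$ such that for every $n\ge1$ and every two complementary intervals $I,J$ of $F_n$ in $[0,1]$ that are separated by at most two adjacent complementary intervals of $F_n$, one has \[\frac{1}{Cn}\le\frac{|I|}{|J|}\le Cn,\] where $|\cdot|$ denotes Euclidean length.
   Context: Define finite subsets $F_n\subset[0,1]$ of rationals: $F_0=\{0/1,1/1\}$, and $F_n$ is obtained from $F_{n-1}$ by inserting, between each pair of consecutive elements $p/q<r/s$ (in lowest terms), the mediant $(p+r)/(q+s)$. The complementary intervals of $F_n$ are the open intervals between consecutive elements of $F_n$. "Separated by at most two adjacent complementary intervals" means that between $I$ and $J$ there are zero, one, or two complementary intervals of $F_n$. *)

theory Defs
  imports Complex_Main
begin

definition mediant :: "rat \<Rightarrow> rat \<Rightarrow> rat" where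
  "mediant a b = (case quotient_of a of (p, q) \<Rightarrow>
                   (case quotient_of b of (r, s) \<Rightarrow> Fract (p + r) (q + s)))"

fun insert_mediants :: "rat list \<Rightarrow> rat list" where
  "insert_mediants (a # b # xs) = a # mediant a b # insert_mediants (b # xs)"
| "insert_mediants xs = xs"

text \<open>F n, as the increasingly sorted list of its elements.\<close>
fun F :: "nat \<Rightarrow> rat list" where
  "F 0 = [0, 1]"
| "F (Suc n) = insert_mediants (F n)"

text \<open>The complementary intervals of F n are indexed by i < length (F n) - 1; the i-th one is
  the open interval between F n ! i and F n ! (i+1).  Its Euclidean length:\<close>
definition cint_len :: "nat \<Rightarrow> nat \<Rightarrow> real" where
  "cint_len n i = real_of_rat (F n ! Suc i - F n ! i)"

end

theory Submission
  imports Defs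
begin

(* Represent F n by the list of lowest-terms pairs (p, q).  Consecutive pairs (p, q), (r, s)
   satisfy q r - p s = 1, so the mediant is simply (p + r, q + s), the k-th complementary
   interval has length 1 / (q_k q_(k+1)), and passing from level n to level n + 1 the
   denominators become q'_(2k) = q_k and q'_(2k+1) = q_k + q_(k+1).  By induction on n, adjacent
   denominators at level n differ by a factor at most n + 1, and q_k <= q_(k+1) + 2 q_(k+2).
   For n >= 1 every interval has a newly inserted (odd-indexed) endpoint whose denominator M is
   the sum of its neighbours', so the product of the two denominators lies between
   M^2 / (n + 1) and M^2.  The second inequality shows that the values of M for nearby
   intervals agree up to a factor 4, which gives the bound with C = 32. *)

fun insert_mediant_pairs :: "(int \<times> int) list \<Rightarrow> (int \<times> int) list" where
  "insert_mediant_pairs ((p, q) # (r, s) # xs) =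
     (p, q) # (p + r, q + s) # insert_mediant_pairs ((r, s) # xs)"
| "insert_mediant_pairs xs = xs"

fun F_pairs :: "nat \<Rightarrow> (int \<times> int) list" where
  "F_pairs 0 = [(0, 1), (1, 1)]"
| "F_pairs (Suc n) = insert_mediant_pairs (F_pairs n)"

fun unimodular_chain :: "(int \<times> int) list \<Rightarrow> bool" where
  "unimodular_chain ((p, q) # (r, s) # xs) =
     (0 < q \<and> q * r - p * s = 1 \<and> unimodular_chain ((r, s) # xs))"
| "unimodular_chain [(p, q)] = (0 < q)"
| "unimodular_chain [] = True"

lemma insert_mediant_pairs_Cons: "\<exists>ys. insert_mediant_pairs (x # xs) = x # ys"
  by (cases x; cases xs) auto

lemma unimodular_chain_Cons_pos: "unimodular_chain (x # xs) \<Longrightarrow> 0 < snd x"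
  by (cases x; cases xs) auto

lemma unimodular_chain_insert_mediant_pairs:
  "unimodular_chain xs \<Longrightarrow> unimodular_chain (insert_mediant_pairs xs)"
proof (induction xs rule: insert_mediant_pairs.induct)
  case (1 p q r s xs)
  obtain ys where ys: "insert_mediant_pairs ((r, s) # xs) = (r, s) # ys"
    using insert_mediant_pairs_Cons by blast
  have tail: "unimodular_chain ((r, s) # xs)" and "0 < q" "q * r - p * s = 1"
    using "1.prems" by auto
  moreover have "0 < s"
    using unimodular_chain_Cons_pos[OF tail] by simp
  moreover have "unimodular_chain ((r, s) # ys)"
    using "1.IH"[OF tail] ys by simp
  ultimately show ?case
    using ys by (simp add: algebra_simps)
qed auto

lemma coprime_if_unimodular:
  fixes p q r s :: int
  assumes "q * r - p * s = 1"
  shows "coprime p q" "coprime r s"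
proof -
  have "is_unit c" if "c dvd q * r - p * s" for c
    using that assms by simp
  then show "coprime p q" "coprime r s"
    by (auto intro!: coprimeI)
qed

lemma mediant_Fract:
  assumes "q * r - p * s = 1" "0 < q" "0 < s"
  shows "mediant (Fract p q) (Fract r s) = Fract (p + r) (q + s)"
  using assms coprime_if_unimodular[OF assms(1)]
  by (simp add: mediant_def quotient_of_Fract)

lemma insert_mediants_map_Fract:
  "unimodular_chain xs \<Longrightarrow>
   insert_mediants (map (\<lambda>(p, q). Fract p q) xs) =
   map (\<lambda>(p, q). Fract p q) (insert_mediant_pairs xs)"
proof (induction xs rule: insert_mediant_pairs.induct)
  case (1 p q r s xs)
  then have "0 < s"
    using unimodular_chain_Cons_pos[of "(r, s)" xs] by simp
  with 1 show ?case
    by (simp add: mediant_Fract)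
qed auto

lemma F_pairs_unimodular: "unimodular_chain (F_pairs n)"
  by (induction n) (simp_all add: unimodular_chain_insert_mediant_pairs)

lemma F_eq_map_F_pairs: "F n = map (\<lambda>(p, q). Fract p q) (F_pairs n)"
  by (induction n) (simp_all add: rat_number_collapse insert_mediants_map_Fract F_pairs_unimodular)

lemma length_F: "length (F n) = length (F_pairs n)"
  by (simp add: F_eq_map_F_pairs)

lemma unimodular_chain_nth_det:
  "unimodular_chain xs \<Longrightarrow> Suc k < length xs \<Longrightarrow>
   snd (xs ! k) * fst (xs ! Suc k) - fst (xs ! k) * snd (xs ! Suc k) = 1"
proof (induction xs arbitrary: k rule: unimodular_chain.induct)
  case (1 p q r s xs)
  then show ?case by (cases k) auto
qed auto

lemma unimodular_chain_nth_pos: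
  "unimodular_chain xs \<Longrightarrow> k < length xs \<Longrightarrow> 0 < snd (xs ! k)"
proof (induction xs arbitrary: k rule: unimodular_chain.induct)
  case (1 p q r s xs)
  then show ?case by (cases k) auto
qed auto

lemma length_insert_mediant_pairs:
  "length (insert_mediant_pairs xs) = 2 * length xs - 1"
  by (induction xs rule: insert_mediant_pairs.induct) auto

lemma nth_insert_mediant_pairs_even:
  "k < length xs \<Longrightarrow> insert_mediant_pairs xs ! (2 * k) = xs ! k"
proof (induction xs arbitrary: k rule: insert_mediant_pairs.induct)
  case (1 p q r s xs)
  then show ?case by (cases k) auto
qed auto

lemma nth_insert_mediant_pairs_odd:
  "Suc k < length xs \<Longrightarrow> insert_mediant_pairs xs ! (2 * k + 1) =
     (fst (xs ! k) + fst (xs ! Suc k), snd (xs ! k) + snd (xs ! Suc k))"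
proof (induction xs arbitrary: k rule: insert_mediant_pairs.induct)
  case (1 p q r s xs)
  then show ?case by (cases k) auto
qed auto

definition den :: "nat \<Rightarrow> nat \<Rightarrow> int" where
  "den n k = snd (F_pairs n ! k)"

lemma den_pos: "k < length (F_pairs n) \<Longrightarrow> 0 < den n k"
  by (simp add: den_def unimodular_chain_nth_pos F_pairs_unimodular)

lemma den_Suc_even: "k < length (F_pairs n) \<Longrightarrow> den (Suc n) (2 * k) = den n k"
  by (simp add: den_def nth_insert_mediant_pairs_even)

lemma den_Suc_odd:
  "Suc k < length (F_pairs n) \<Longrightarrow> den (Suc n) (2 * k + 1) = den n k + den n (Suc k)"
  using nth_insert_mediant_pairs_odd[of k "F_pairs n"] by (simp add: den_def)

lemma cint_len_eq:
  assumes "Suc i < length (F n)"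
  shows "cint_len n i = 1 / (of_int (den n i) * of_int (den n (Suc i)))"
proof -
  obtain p q r s where pq: "F_pairs n ! i = (p, q)" and rs: "F_pairs n ! Suc i = (r, s)"
    by (metis surj_pair)
  have i: "Suc i < length (F_pairs n)"
    using assms by (simp add: length_F)
  have det: "q * r - p * s = 1"
    using unimodular_chain_nth_det[OF F_pairs_unimodular i] pq rs by simp
  have "0 < q" "0 < s"
    using den_pos[of i n] den_pos[OF i] i pq rs by (simp_all add: den_def)
  then have "F n ! Suc i - F n ! i = Fract (q * r - p * s) (s * q)"
    using i pq rs by (simp add: F_eq_map_F_pairs algebra_simps)
  also have "\<dots> = of_int 1 / of_int (s * q)"
    by (simp add: det Fract_of_int_quotient)
  finally show ?thesis
    using pq rs by (simp add: cint_len_def den_def of_rat_divide of_rat_mult mult.commute)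
qed

lemma den_adjacent_le:
  "Suc k < length (F_pairs n) \<Longrightarrow>
   den n k \<le> (int n + 1) * den n (Suc k) \<and> den n (Suc k) \<le> (int n + 1) * den n k"
proof (induction n arbitrary: k)
  case 0
  then show ?case by (simp add: den_def less_Suc_eq)
next
  case (Suc n)
  obtain l where "k = 2 * l \<or> k = 2 * l + 1"
    by (metis oddE evenE)
  then show ?case
  proof
    assume k: "k = 2 * l"
    then have l: "Suc l < length (F_pairs n)"
      using Suc.prems by (simp add: length_insert_mediant_pairs)
    have "den (Suc n) k = den n l" "den (Suc n) (Suc k) = den n l + den n (Suc l)"
      using den_Suc_even[of l n] den_Suc_odd[OF l] l k by auto
    then show ?thesis
      using Suc.IH[OF l] den_pos[of l n] den_pos[OF l] l by (simp add: algebra_simps)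
  next
    assume k: "k = 2 * l + 1"
    then have l: "Suc l < length (F_pairs n)"
      using Suc.prems by (simp add: length_insert_mediant_pairs)
    have "den (Suc n) k = den n l + den n (Suc l)" "den (Suc n) (Suc k) = den n (Suc l)"
      using den_Suc_even[OF l] den_Suc_odd[OF l] k by auto
    then show ?thesis
      using Suc.IH[OF l] den_pos[of l n] den_pos[OF l] l by (simp add: algebra_simps)
  qed
qed

lemma den_second_neighbour_le:
  "Suc (Suc k) < length (F_pairs n) \<Longrightarrow>
   den n k \<le> den n (Suc k) + 2 * den n (Suc (Suc k)) \<and>
   den n (Suc (Suc k)) \<le> den n (Suc k) + 2 * den n k"
proof (induction n arbitrary: k)
  case 0
  then show ?case by simp
next
  case (Suc n)
  obtain l where "k = 2 * l \<or> k = 2 * l + 1"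
    by (metis oddE evenE)
  then show ?case
  proof
    assume k: "k = 2 * l"
    then have l: "Suc l < length (F_pairs n)"
      using Suc.prems by (simp add: length_insert_mediant_pairs)
    have "den (Suc n) k = den n l" "den (Suc n) (Suc k) = den n l + den n (Suc l)"
      "den (Suc n) (Suc (Suc k)) = den n (Suc l)"
      using den_Suc_even[of l n] den_Suc_even[OF l] den_Suc_odd[OF l] l k by auto
    then show ?thesis
      using den_pos[of l n] den_pos[OF l] l by simp
  next
    assume k: "k = 2 * l + 1"
    then have l: "Suc (Suc l) < length (F_pairs n)"
      using Suc.prems by (simp add: length_insert_mediant_pairs)
    have "den (Suc n) k = den n l + den n (Suc l)" "den (Suc n) (Suc k) = den n (Suc l)"
      "den (Suc n) (Suc (Suc k)) = den n (Suc l) + den n (Suc (Suc l))"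
      using den_Suc_even[of "Suc l" n] den_Suc_odd[of l n] den_Suc_odd[OF l] l k by auto
    then show ?thesis
      using Suc.IH[OF l] den_pos[of "Suc l" n] l by simp
  qed
qed

lemma den_Suc_odd_le_twice_next_odd:
  assumes "Suc (Suc l) < length (F_pairs n)"
  shows "den (Suc n) (2 * l + 1) \<le> 2 * den (Suc n) (2 * Suc l + 1) \<and>
    den (Suc n) (2 * Suc l + 1) \<le> 2 * den (Suc n) (2 * l + 1)"
  using den_Suc_odd[of l n] den_Suc_odd[OF assms] den_second_neighbour_le[OF assms]
    den_pos[of l n] den_pos[of "Suc l" n] den_pos[OF assms] assms
  by simp

lemma den_Suc_odd_near_le:
  assumes "Suc l < length (F_pairs n)" "Suc l' < length (F_pairs n)" "l \<le> l' + 2" "l' \<le> l + 2"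
  shows "den (Suc n) (2 * l + 1) \<le> 4 * den (Suc n) (2 * l' + 1)"
proof -
  define M where "M k = den (Suc n) (2 * k + 1)" for k
  have M_pos: "0 < M k" if "Suc k < length (F_pairs n)" for k
    using den_Suc_odd[OF that] den_pos[of k n] den_pos[OF that] that by (simp add: M_def)
  have step: "M k \<le> 2 * M (Suc k) \<and> M (Suc k) \<le> 2 * M k"
    if "Suc (Suc k) < length (F_pairs n)" for k
    using den_Suc_odd_le_twice_next_odd[OF that] by (simp add: M_def)
  have "l' = l \<or> l' = Suc l \<or> l' = Suc (Suc l) \<or> l = Suc l' \<or> l = Suc (Suc l')"
    using assms(3,4) by linarith
  then have "M l \<le> 4 * M l'"
    using step[of l] step[of "Suc l"] step[of l'] step[of "Suc l'"]
      M_pos[OF assms(1)] M_pos[OF assms(2)] M_pos[of "Suc l"] M_pos[of "Suc l'"] assms(1,2)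
    by auto
  then show ?thesis
    by (simp add: M_def)
qed

lemma den_product_bounds:
  assumes "Suc i < length (F_pairs (Suc n))"
  defines "M \<equiv> den (Suc n) (2 * (i div 2) + 1)"
  shows "M * M \<le> (int n + 2) * (den (Suc n) i * den (Suc n) (Suc i)) \<and>
    den (Suc n) i * den (Suc n) (Suc i) \<le> M * M"
proof -
  define l where "l = i div 2"
  have l: "Suc l < length (F_pairs n)"
    using assms(1) by (simp add: l_def length_insert_mediant_pairs)
  define a b where "a = den n l" and "b = den n (Suc l)"
  have ab: "0 < a" "0 < b" "a \<le> (int n + 1) * b" "b \<le> (int n + 1) * a"
    using den_pos[of l n] den_pos[OF l] den_adjacent_le[OF l] l by (simp_all add: a_def b_def)
  have M: "M = a + b"
    using den_Suc_odd[OF l] by (simp add: M_def a_def b_def l_def)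
  have "den (Suc n) i * den (Suc n) (Suc i) = (if even i then a else b) * M"
  proof (cases "even i")
    case True
    then have "i = 2 * l" "Suc i = 2 * l + 1"
      by (simp_all add: l_def)
    then show ?thesis
      using True den_Suc_even[of l n] l by (simp add: M_def l_def a_def)
  next
    case False
    then have "i = 2 * l + 1" "Suc i = 2 * Suc l"
      by (simp_all add: l_def)
    then show ?thesis
      using False den_Suc_even[OF l] by (simp add: M_def l_def b_def)
  qed
  moreover have "M \<le> (int n + 2) * a" "M \<le> (int n + 2) * b"
    using M ab by (simp_all add: algebra_simps)
  ultimately show ?thesis
    using M ab by (auto simp: mult_right_mono)
qed

lemma den_product_near_le:
  assumes i: "Suc i < length (F_pairs (Suc n))" and j: "Suc j < length (F_pairs (Suc n))"
    and "i \<le> j + 3" "j \<le> i + 3"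
  shows "den (Suc n) j * den (Suc n) (Suc j) \<le>
    32 * int (Suc n) * (den (Suc n) i * den (Suc n) (Suc i))"
proof -
  define P where "P k = den (Suc n) k * den (Suc n) (Suc k)" for k
  define M where "M k = den (Suc n) (2 * (k div 2) + 1)" for k
  have "2 * (j div 2) + 1 < length (F_pairs (Suc n))"
    using j times_div_less_eq_dividend[of 2 j] by linarith
  then have "0 \<le> M j"
    using den_pos by (simp add: M_def less_imp_le)
  have "0 \<le> P i"
    unfolding P_def using den_pos[OF i] den_pos[OF Suc_lessD[OF i]] by simp
  have "M j \<le> 4 * M i"
    using den_Suc_odd_near_le[of "j div 2" n "i div 2"] assms
    by (simp add: M_def length_insert_mediant_pairs)
  have "P j \<le> M j * M j"
    using den_product_bounds[OF j] by (simp add: M_def P_def)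
  also have "\<dots> \<le> (4 * M i) * (4 * M i)"
    using \<open>0 \<le> M j\<close> \<open>M j \<le> 4 * M i\<close> by (intro mult_mono) auto
  also have "\<dots> = 16 * (M i * M i)"
    by simp
  also have "\<dots> \<le> 16 * ((int n + 2) * P i)"
    using den_product_bounds[OF i] by (simp add: M_def P_def)
  also have "\<dots> = 16 * (int n + 2) * P i"
    by (simp only: mult.assoc)
  also have "\<dots> \<le> 32 * int (Suc n) * P i"
    using \<open>0 \<le> P i\<close> by (intro mult_right_mono) simp_all
  finally show ?thesis
    by (simp add: P_def)
qed

theorem proposition9p3:
  shows "\<exists>C::real. C \<ge> 1 \<and>
    (\<forall>n::nat. n \<ge> 1 \<longrightarrow>
      (\<forall>i j. i < length (F n) - 1 \<longrightarrow> j < length (F n) - 1 \<longrightarrow> i \<noteq> j \<longrightarrow>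
         (i \<le> j + 3 \<and> j \<le> i + 3) \<longrightarrow>
         1 / (C * real n) \<le> cint_len n i / cint_len n j \<and>
         cint_len n i / cint_len n j \<le> C * real n))"
proof (intro exI[of _ 32] conjI allI impI)
  fix n i j :: nat
  assume "1 \<le> n" and i: "i < length (F n) - 1" and j: "j < length (F n) - 1"
    and near: "i \<le> j + 3 \<and> j \<le> i + 3"
  then obtain m where n: "n = Suc m"
    using not0_implies_Suc by fastforce
  define P where "P k = real_of_int (den n k * den n (Suc k))" for k
  have pos: "0 < P i" "0 < P j"
    using i j den_pos by (simp_all add: P_def length_F)
  have i': "Suc i < length (F_pairs (Suc m))" and j': "Suc j < length (F_pairs (Suc m))"
    using i j length_F[of n] unfolding n by linarith+
  have "real_of_int (den n j * den n (Suc j)) \<le> real_of_int (32 * int n * (den n i * den n (Suc i)))"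
    "real_of_int (den n i * den n (Suc i)) \<le> real_of_int (32 * int n * (den n j * den n (Suc j)))"
    unfolding of_int_le_iff n using den_product_near_le[OF i' j'] den_product_near_le[OF j' i'] near
    by simp_all
  then have bounds: "P j \<le> 32 * real n * P i" "P i \<le> 32 * real n * P j"
    by (simp_all add: P_def)
  have ratio: "cint_len n i / cint_len n j = P j / P i"
    using i j by (simp add: P_def cint_len_eq)
  show "1 / (32 * real n) \<le> cint_len n i / cint_len n j"
    "cint_len n i / cint_len n j \<le> 32 * real n"
    unfolding ratio using bounds pos \<open>1 \<le> n\<close> by (simp_all add: field_simps)
qed simp

end
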